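(* Let $f=p/q$ be a rational function, $p,q$ of degree $l$, positive on the standard simplex $\Delta$, with $p>0$ on $\Delta$ and $b_\alpha(q,j,\Delta)>0$ for all $|\alpha|=j$, $j\ge l$. Let \[ D_1=\frac{\omega}{\min_{x\in\Delta}f(x)}+1,\qquad D_2=\frac{l(l-1)}{2}\,\frac{\max_{|\alpha|=l}|b_\alpha(p,l,\Delta)|}{\underline p}, \] where $\underline p=\min_\Delta p$. If $k>\max\{D_1,D_2\}$, then $f$ satisfies the global certificate of positivity $\mathrm{Cert}(b(f,k,\Delta))$: $b_\alpha(f,k,\Delta)\ge0$ for all $|\alpha|=k$ and $b_{k\hat e_i}(f,k,\Delta)>0$ for $i=0,\dots,n$.
   Context: $\Delta$ is the standard simplex with barycentric coordinates $\lambda=(1-\sum x_i,x_1,\dots,x_n)$; $B^{(k)}_\alpha=\frac{k!}{\alpha_0!\cdots\alpha_n!}\lambda^\alpha$; $b_\alpha(p,k,\Delta)$ Bernstein coefficients; $b_\alpha(f,k,\Delta)=b_\alpha(p,k,\Delta)/b_\alpha(q,k,\Delta)$; $\hat e_i$ unit vectors of $\mathbb{R}^{n+1}$. $\omega:=\frac{n(n+2)l(l-1)}{24\min_{|\alpha|=l}b_\alpha(q,l,\Delta)}\big(\|\nabla^2p\|_\infty+\zeta\|\nabla^2q\|_\infty\big)$ with $\zeta:=\max\{|\min_{|\alpha|=l}b_\alpha(f,l,\Delta)|,|\max_{|\alpha|=l}b_\alpha(f,l,\Delta)|\}$ and, with convention $\hat e_{-1}:=\hat e_n$, $\|\nabla^2p\|_\infty=\max_{|\gamma|=l-2,0\le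 i<j\le n}|b_{\gamma+\hat e_i+\hat e_{j-1}}+b_{\gamma+\hat e_{i-1}+\hat e_j}-b_{\gamma+\hat e_{i-1}+\hat e_{j-1}}-b_{\gamma+\hat e_i+\hat e_j}|$ for $b=b(p,l,\Delta)$, likewise for $q$. *)

theory Defs
  imports Complex_Main
begin

text \<open>Points of R^n are functions x :: nat => real; only x 1, ..., x n matter.
  Multi-indices alpha = (alpha_0, ..., alpha_n) are functions nat => nat vanishing beyond n.
  A polynomial in x_1..x_n is given by its coefficient function c on exponent vectors
  beta (beta 0 = 0, beta i = 0 for i > n).\<close>

definition simplex :: "nat \<Rightarrow> (nat \<Rightarrow> real) set" where
  "simplex n = {x. (\<forall>i. (i = 0 \<or> n < i) \<longrightarrow> x i = 0) \<and> (\<forall>i\<in>{1..n}. 0 \<le> x i)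
                  \<and> (\<Sum>i\<in>{1..n}. x i) \<le> 1}"

definition bary :: "nat \<Rightarrow> (nat \<Rightarrow> real) \<Rightarrow> nat \<Rightarrow> real" where
  "bary n x i = (if i = 0 then 1 - (\<Sum>j\<in>{1..n}. x j) else x i)"

definition multi_idx :: "nat \<Rightarrow> nat \<Rightarrow> (nat \<Rightarrow> nat) set" where
  "multi_idx n k = {\<alpha>. (\<forall>i>n. \<alpha> i = 0) \<and> (\<Sum>i\<in>{0..n}. \<alpha> i) = k}"

definition bernstein :: "nat \<Rightarrow> nat \<Rightarrow> (nat \<Rightarrow> nat) \<Rightarrow> (nat \<Rightarrow> real) \<Rightarrow> real" where
  "bernstein n k \<alpha> x = fact k / (\<Prod>i\<in>{0..n}. fact (\<alpha> i)) * (\<Prod>i\<in>{0..n}. bary n x i ^ \<alpha> i)"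

definition monomial_exps :: "nat \<Rightarrow> nat \<Rightarrow> (nat \<Rightarrow> nat) set" where
  "monomial_exps n l = {\<beta>. \<beta> 0 = 0 \<and> (\<forall>i>n. \<beta> i = 0) \<and> (\<Sum>i\<in>{1..n}. \<beta> i) \<le> l}"

definition is_poly :: "nat \<Rightarrow> nat \<Rightarrow> ((nat \<Rightarrow> nat) \<Rightarrow> real) \<Rightarrow> bool" where
  "is_poly n l c \<longleftrightarrow> (\<forall>\<beta>. c \<beta> \<noteq> 0 \<longrightarrow> \<beta> \<in> monomial_exps n l)"

definition peval :: "nat \<Rightarrow> ((nat \<Rightarrow> nat) \<Rightarrow> real) \<Rightarrow> (nat \<Rightarrow> real) \<Rightarrow> real" where
  "peval n c x = (\<Sum>\<beta>\<in>{\<beta>. c \<beta> \<noteq> 0}. c \<beta> * (\<Prod>i\<in>{1..n}. x i ^ \<beta> i))"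

text \<open>Bernstein coefficients b_alpha(p,k,Delta): the coefficients of p in the
  Bernstein basis of degree k (unique when deg p <= k).\<close>
definition bern_coeff :: "nat \<Rightarrow> ((nat \<Rightarrow> nat) \<Rightarrow> real) \<Rightarrow> nat \<Rightarrow> (nat \<Rightarrow> nat) \<Rightarrow> real" where
  "bern_coeff n c k = (THE b. (\<forall>\<alpha>. \<alpha> \<notin> multi_idx n k \<longrightarrow> b \<alpha> = 0) \<and>
      (\<forall>x. peval n c x = (\<Sum>\<alpha>\<in>multi_idx n k. b \<alpha> * bernstein n k \<alpha> x)))"

definition bern_coeff_f ::
  "nat \<Rightarrow> ((nat \<Rightarrow> nat) \<Rightarrow> real) \<Rightarrow> ((nat \<Rightarrow> nat) \<Rightarrow> real) \<Rightarrow> nat \<Rightarrow> (nat \<Rightarrow> nat) \<Rightarrow> real" where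
  "bern_coeff_f n p q k \<alpha> = bern_coeff n p k \<alpha> / bern_coeff n q k \<alpha>"

text \<open>Index shift with convention e_{-1} = e_n.\<close>
definition prev_idx :: "nat \<Rightarrow> nat \<Rightarrow> nat" where
  "prev_idx n i = (if i = 0 then n else i - 1)"

definition add2 :: "(nat \<Rightarrow> nat) \<Rightarrow> nat \<Rightarrow> nat \<Rightarrow> (nat \<Rightarrow> nat)" where
  "add2 \<gamma> i j = (\<lambda>t. \<gamma> t + (if t = i then 1 else 0) + (if t = j then 1 else 0))"

definition hess_norm :: "nat \<Rightarrow> nat \<Rightarrow> ((nat \<Rightarrow> nat) \<Rightarrow> real) \<Rightarrow> real" where
  "hess_norm n l b = Max {\<bar>b (add2 \<gamma> i (prev_idx n j)) + b (add2 \<gamma> (prev_idx n i) j)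
        - b (add2 \<gamma> (prev_idx n i) (prev_idx n j)) - b (add2 \<gamma> i j)\<bar> | \<gamma> i j.
        \<gamma> \<in> multi_idx n (l - 2) \<and> i < j \<and> j \<le> n}"

definition omega :: "nat \<Rightarrow> nat \<Rightarrow> ((nat \<Rightarrow> nat) \<Rightarrow> real) \<Rightarrow> ((nat \<Rightarrow> nat) \<Rightarrow> real) \<Rightarrow> real" where
  "omega n l p q =
    (let bf = bern_coeff_f n p q l;
         \<zeta> = max \<bar>Min (bf ` multi_idx n l)\<bar> \<bar>Max (bf ` multi_idx n l)\<bar>
     in real (n * (n + 2) * l * (l - 1)) / (24 * Min (bern_coeff n q l ` multi_idx n l))
        * (hess_norm n l (bern_coeff n p l) + \<zeta> * hess_norm n l (bern_coeff n q l)))"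

definition unit_mult :: "nat \<Rightarrow> nat \<Rightarrow> (nat \<Rightarrow> nat)" where
  "unit_mult k i = (\<lambda>t. if t = i then k else 0)"

definition Cert :: "nat \<Rightarrow> nat \<Rightarrow> ((nat \<Rightarrow> nat) \<Rightarrow> real) \<Rightarrow> bool" where
  "Cert n k b \<longleftrightarrow> (\<forall>\<alpha>\<in>multi_idx n k. 0 \<le> b \<alpha>) \<and> (\<forall>i\<le>n. 0 < b (unit_mult k i))"

end

theory Submission
  imports Defs "HOL-Analysis.Function_Topology" "HOL-Combinatorics.Multiset_Permutations"
begin

text \<open>With \<open>y\<close> the barycentric coordinates of \<open>x\<close>, a form of degree \<open>k\<close> is a sum over words
  \<open>ts \<in> {0..n}\<^sup>k\<close> of \<open>G ts * (\<Prod>u\<leftarrow>ts. y u)\<close>, and its Bernstein coefficient at \<open>\<alpha>\<close> is the mean of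
  \<open>G\<close> over the words with letter counts \<open>\<alpha>\<close>. Raising the degree of \<open>p\<close> from \<open>l\<close> to \<open>k\<close> replaces
  the coefficient \<open>b\<^sub>\<alpha>(p,l)\<close> of a word by its mean over the subwords of a word of length \<open>k\<close>
  read off by the injections \<open>{..<l} \<rightarrow> {..<k}\<close>. The same sum over all maps instead of injections
  equals \<open>k ^ l\<close> times the value of \<open>p\<close> at the point whose barycentric coordinates are the
  letter frequencies, hence is at least \<open>k ^ l * min p\<close>; the at most \<open>l(l-1)/2 * k ^ (l-1)\<close>
  non-injective maps contribute at most \<open>max |b\<^sub>\<alpha>(p,l)|\<close> each. So \<open>k > D\<^sub>2\<close> makes every
  \<open>b\<^sub>\<alpha>(p,k)\<close> positive, and \<open>b\<^sub>\<alpha>(f,k) = b\<^sub>\<alpha>(p,k) / b\<^sub>\<alpha>(q,k)\<close> with \<open>b\<^sub>\<alpha>(q,k) > 0\<close>.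
  The bound \<open>k > D\<^sub>2\<close> alone already forces \<open>k \<ge> l\<close>.\<close>

section \<open>Words over a finite alphabet\<close>

definition words :: "'a set \<Rightarrow> nat \<Rightarrow> 'a list set" where
  "words A m = {xs. length xs = m \<and> set xs \<subseteq> A}"

lemma finite_words: "finite A \<Longrightarrow> finite (words A m)"
  using finite_lists_length_eq[of A m] by (simp add: words_def conj_commute)

lemma card_words: "finite A \<Longrightarrow> card (words A m) = card A ^ m"
  using card_lists_length_eq[of A m] by (simp add: words_def conj_commute)

lemma words_0 [simp]: "words A 0 = {[]}"
  by (auto simp: words_def)

lemma sum_words_Suc:
  fixes f :: "'a list \<Rightarrow> 'b::comm_monoid_add"
  shows "(\<Sum>ts\<in>words A (Suc m). f ts) = (\<Sum>a\<in>A. \<Sum>vs\<in>words A m. f (a # vs))"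
proof -
  have "words A (Suc m) = (\<lambda>(a, vs). a # vs) ` (A \<times> words A m)"
    by (auto simp: words_def length_Suc_conv image_iff)
  moreover have "inj_on (\<lambda>(a, vs). a # vs) (A \<times> words A m)"
    by (auto simp: inj_on_def)
  ultimately have "(\<Sum>ts\<in>words A (Suc m). f ts) = (\<Sum>(a, vs)\<in>A \<times> words A m. f (a # vs))"
    by (simp add: sum.reindex case_prod_unfold)
  then show ?thesis
    by (simp only: sum.cartesian_product)
qed

lemma sum_prod_list_words:
  fixes y :: "'a \<Rightarrow> 'b::comm_semiring_1"
  shows "(\<Sum>ts\<in>words A m. \<Prod>u\<leftarrow>ts. y u) = (\<Sum>i\<in>A. y i) ^ m"
  by (induction m) (simp_all add: sum_words_Suc sum_distrib_left [symmetric] sum_distrib_right [symmetric])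

lemma sum_words_take:
  fixes H :: "'a list \<Rightarrow> 'b::comm_semiring_1"
  assumes "l \<le> k"
  shows "(\<Sum>ts\<in>words A k. H (take l ts) * (\<Prod>u\<leftarrow>ts. y u))
       = (\<Sum>us\<in>words A l. H us * (\<Prod>u\<leftarrow>us. y u)) * (\<Sum>i\<in>A. y i) ^ (k - l)"
proof -
  let ?append = "\<lambda>(us, vs). us @ vs"
  have image: "?append ` (words A l \<times> words A (k - l)) = words A k"
  proof
    show "?append ` (words A l \<times> words A (k - l)) \<subseteq> words A k"
      using assms by (auto simp: words_def)
  next
    show "words A k \<subseteq> ?append ` (words A l \<times> words A (k - l))"
    proof
      fix ts assume ts: "ts \<in> words A k"
      have "take l ts \<in> words A l" "drop l ts \<in> words A (k - l)"
        using ts assms by (auto simp: words_def min_def dest: in_set_takeD in_set_dropD)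
      moreover have "ts = ?append (take l ts, drop l ts)"
        by simp
      ultimately show "ts \<in> ?append ` (words A l \<times> words A (k - l))"
        by blast
    qed
  qed
  have inj: "inj_on ?append (words A l \<times> words A (k - l))"
    by (auto simp: inj_on_def words_def)
  have "(\<Sum>ts\<in>words A k. H (take l ts) * (\<Prod>u\<leftarrow>ts. y u))
      = (\<Sum>p\<in>words A l \<times> words A (k - l). H (take l (?append p)) * (\<Prod>u\<leftarrow>?append p. y u))"
    by (subst image[symmetric], subst sum.reindex[OF inj]) (simp add: comp_def)
  also have "\<dots> = (\<Sum>p\<in>words A l \<times> words A (k - l).
      (H (fst p) * (\<Prod>u\<leftarrow>fst p. y u)) * (\<Prod>u\<leftarrow>snd p. y u))"
    by (intro sum.cong) (auto simp: words_def mult.assoc)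
  also have "\<dots> = (\<Sum>us\<in>words A l. H us * (\<Prod>u\<leftarrow>us. y u)) * (\<Sum>vs\<in>words A (k - l). \<Prod>u\<leftarrow>vs. y u)"
    by (simp add: sum_product sum.cartesian_product case_prod_unfold)
  finally show ?thesis
    by (simp add: sum_prod_list_words)
qed

lemma map_nth_in_words:
  assumes "ts \<in> words A k" "s \<in> words {..<k} l"
  shows "map (nth ts) s \<in> words A l"
proof -
  have "ts ! j \<in> A" if "j \<in> set s" for j
  proof -
    have "j < length ts"
      using that assms by (auto simp: words_def)
    then have "ts ! j \<in> set ts"
      by (rule nth_mem)
    then show ?thesis
      using assms(1) by (auto simp: words_def)
  qed
  then show ?thesis
    using assms(2) by (auto simp: words_def)
qed

lemma bij_betw_permute_positions:
  assumes "finite A" "distinct \<sigma>" "set \<sigma> = {..<k}"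
  shows "bij_betw (\<lambda>ts. map (nth ts) \<sigma>) (words A k) (words A k)"
proof -
  have "\<sigma> \<in> words {..<k} k"
    using distinct_card[OF assms(2)] assms(3) by (simp add: words_def)
  then have closed: "map (nth ts) \<sigma> \<in> words A k" if "ts \<in> words A k" for ts
    using map_nth_in_words[OF that] by blast
  have inj: "inj_on (\<lambda>ts. map (nth ts) \<sigma>) (words A k)"
  proof (rule inj_onI)
    fix ts ts' assume ts: "ts \<in> words A k" "ts' \<in> words A k" and eq: "map (nth ts) \<sigma> = map (nth ts') \<sigma>"
    show "ts = ts'"
    proof (rule nth_equalityI)
      show "length ts = length ts'"
        using ts by (simp add: words_def)
      fix j assume "j < length ts"
      then have "j \<in> set \<sigma>"
        using ts(1) assms(3) by (simp add: words_def)
      then obtain q where q: "q < length \<sigma>" "\<sigma> ! q = j"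
        by (auto simp: in_set_conv_nth)
      have "map (nth ts) \<sigma> ! q = map (nth ts') \<sigma> ! q"
        by (simp only: eq)
      then show "ts ! j = ts' ! j"
        using q by simp
    qed
  qed
  have "(\<lambda>ts. map (nth ts) \<sigma>) ` words A k = words A k"
    by (rule endo_inj_surj[OF finite_words[OF \<open>finite A\<close>] image_subsetI[OF closed] inj])
  with inj show ?thesis
    by (simp add: bij_betw_def)
qed

lemma mset_permute_positions:
  assumes "distinct \<sigma>" "set \<sigma> = {..<length ts}"
  shows "mset (map (nth ts) \<sigma>) = mset ts"
proof -
  have "mset \<sigma> = mset [0..<length ts]"
    using assms mset_set_set[of \<sigma>] mset_set_set[of "[0..<length ts]"] by (simp add: atLeast0LessThan)
  then have "mset (map (nth ts) \<sigma>) = image_mset (nth ts) (mset [0..<length ts])"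
    by (simp only: mset_map)
  also have "\<dots> = mset ts"
    using map_nth[of ts] by (simp only: mset_map[symmetric])
  finally show ?thesis .
qed

text \<open>Moving a distinct list of positions to the front by a permutation of all positions.\<close>

lemma sum_words_subword:
  fixes H :: "'a list \<Rightarrow> 'b::comm_semiring_1"
  assumes "finite A" and s: "distinct s" "length s = l" "set s \<subseteq> {..<k}"
  shows "(\<Sum>ts\<in>words A k. H (map (nth ts) s) * (\<Prod>u\<leftarrow>ts. y u))
       = (\<Sum>ts\<in>words A k. H (take l ts) * (\<Prod>u\<leftarrow>ts. y u))"
proof -
  define \<sigma> where "\<sigma> = s @ filter (\<lambda>j. j \<notin> set s) [0..<k]"
  have \<sigma>: "distinct \<sigma>" "set \<sigma> = {..<k}"
    using s by (auto simp: \<sigma>_def)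
  have prod: "(\<Prod>u\<leftarrow>map (nth ts) \<sigma>. y u) = (\<Prod>u\<leftarrow>ts. y u)" if "ts \<in> words A k" for ts
  proof -
    have "mset (map (nth ts) \<sigma>) = mset ts"
      using that \<sigma> by (intro mset_permute_positions) (simp_all add: words_def)
    then have "mset (map y (map (nth ts) \<sigma>)) = mset (map y ts)"
      by (simp only: mset_map)
    then show ?thesis
      by (metis prod_mset_prod_list)
  qed
  have take: "take l (map (nth ts) \<sigma>) = map (nth ts) s" for ts
    using s by (simp add: \<sigma>_def)
  have "(\<Sum>ts\<in>words A k. H (take l ts) * (\<Prod>u\<leftarrow>ts. y u))
      = (\<Sum>ts\<in>words A k. H (take l (map (nth ts) \<sigma>)) * (\<Prod>u\<leftarrow>map (nth ts) \<sigma>. y u))"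
    by (rule sum.reindex_bij_betw[OF bij_betw_permute_positions[OF \<open>finite A\<close> \<sigma>], symmetric])
  also have "\<dots> = (\<Sum>ts\<in>words A k. H (map (nth ts) s) * (\<Prod>u\<leftarrow>ts. y u))"
    by (intro sum.cong refl) (simp only: take prod)
  finally show ?thesis ..
qed

lemma prod_list_eq_prod_count_list:
  "set ts \<subseteq> {0..n::nat} \<Longrightarrow> (\<Prod>u\<leftarrow>ts. y u) = (\<Prod>i\<in>{0..n}. y i ^ count_list ts i)"
proof (induction ts)
  case (Cons a ts)
  have "(\<Prod>i\<in>{0..n}. y i ^ count_list (a # ts) i)
      = (\<Prod>i\<in>{0..n}. (if i = a then y i else 1) * y i ^ count_list ts i)"
    by (intro prod.cong) auto
  also have "\<dots> = y a * (\<Prod>i\<in>{0..n}. y i ^ count_list ts i)"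
    using Cons.prems by (simp add: prod.distrib)
  finally show ?case
    using Cons by simp
qed simp

lemma count_list_in_multi_idx: "ts \<in> words {0..n} k \<Longrightarrow> count_list ts \<in> multi_idx n k"
  by (force simp: multi_idx_def words_def sum_count_set count_list_0_iff)

definition canonical_word :: "nat \<Rightarrow> (nat \<Rightarrow> nat) \<Rightarrow> nat list" where
  "canonical_word n \<alpha> = concat (map (\<lambda>i. replicate (\<alpha> i) i) [0..<Suc n])"

lemma set_canonical_word: "set (canonical_word n \<alpha>) \<subseteq> {0..n}"
  by (auto simp: canonical_word_def)

lemma count_list_canonical_word:
  "count_list (canonical_word n \<alpha>) i = (if i \<le> n then \<alpha> i else 0)"
proof -
  have replicate: "count_list (replicate m j) i = (if j = i then m else 0)" for m j
    by (induction m) auto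
  have "count_list (concat (map (\<lambda>j. replicate (\<alpha> j) j) js)) i = (\<Sum>j\<leftarrow>js. if j = i then \<alpha> j else 0)"
    for js
    by (induction js) (simp_all add: replicate)
  then show ?thesis
    by (simp add: canonical_word_def replicate atLeast0LessThan sum.delta' flip: sum_set_upt_conv_sum_list_nat)
qed

lemma count_list_canonical_word_eq: "\<alpha> \<in> multi_idx n k \<Longrightarrow> count_list (canonical_word n \<alpha>) = \<alpha>"
  by (auto simp: multi_idx_def count_list_canonical_word not_le)

lemma canonical_word_in_words: "\<alpha> \<in> multi_idx n k \<Longrightarrow> canonical_word n \<alpha> \<in> words {0..n} k"
  using sum_count_set[OF set_canonical_word, of n \<alpha>] count_list_canonical_word_eq[of \<alpha> n k]
  by (simp add: words_def set_canonical_word multi_idx_def)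

lemma finite_multi_idx: "finite (multi_idx n k)"
proof (rule finite_subset)
  show "multi_idx n k \<subseteq> count_list ` words {0..n} k"
    using canonical_word_in_words count_list_canonical_word_eq by (metis image_eqI subsetI)
qed (simp add: finite_words)

definition words_with_counts :: "nat \<Rightarrow> nat \<Rightarrow> (nat \<Rightarrow> nat) \<Rightarrow> nat list set" where
  "words_with_counts n k \<alpha> = {ts \<in> words {0..n} k. count_list ts = \<alpha>}"

lemma finite_words_with_counts: "finite (words_with_counts n k \<alpha>)"
  by (simp add: words_with_counts_def finite_words)

lemma words_with_counts_eq_permutations:
  assumes "\<alpha> \<in> multi_idx n k"
  shows "words_with_counts n k \<alpha> = permutations_of_multiset (mset (canonical_word n \<alpha>))"
proof -
  have "count_list ts = \<alpha> \<longleftrightarrow> mset ts = mset (canonical_word n \<alpha>)" for ts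
    using count_list_canonical_word_eq[OF assms] by (auto simp: multiset_eq_iff count_mset)
  moreover have "ts \<in> words {0..n} k" if "mset ts = mset (canonical_word n \<alpha>)" for ts
    using canonical_word_in_words[OF assms] mset_eq_length[OF that] mset_eq_setD[OF that]
    by (simp add: words_def)
  ultimately show ?thesis
    by (auto simp: words_with_counts_def permutations_of_multiset_def)
qed

lemma card_words_with_counts:
  assumes "\<alpha> \<in> multi_idx n k"
  shows "real (card (words_with_counts n k \<alpha>)) * (\<Prod>i\<in>{0..n}. fact (\<alpha> i)) = fact k"
proof -
  define A where "A = mset (canonical_word n \<alpha>)"
  have perm: "words_with_counts n k \<alpha> = permutations_of_multiset A"
    unfolding A_def by (rule words_with_counts_eq_permutations[OF assms])
  have size: "size A = k"
    using canonical_word_in_words[OF assms] by (simp add: A_def words_def)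
  have prod: "(\<Prod>x\<in>set_mset A. fact (count A x) :: nat) = (\<Prod>i\<in>{0..n}. fact (\<alpha> i))"
  proof (rule prod.mono_neutral_cong_left)
    show "set_mset A \<subseteq> {0..n}"
      using set_canonical_word by (simp add: A_def)
    show "fact (count A i) = fact (\<alpha> i)" for i
      using count_list_canonical_word_eq[OF assms] by (simp add: A_def count_mset)
    show "\<forall>i\<in>{0..n} - set_mset A. fact (\<alpha> i) = 1"
    proof
      fix i assume "i \<in> {0..n} - set_mset A"
      then have "count_list (canonical_word n \<alpha>) i = 0"
        by (simp add: A_def)
      then show "fact (\<alpha> i) = 1"
        using count_list_canonical_word_eq[OF assms] by simp
    qed
  qed simp
  have "card (words_with_counts n k \<alpha>) * (\<Prod>i\<in>{0..n}. fact (\<alpha> i)) = (fact k :: nat)"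
    using card_permutations_of_multiset_aux[of A] by (simp only: perm size prod)
  then have "real (card (words_with_counts n k \<alpha>) * (\<Prod>i\<in>{0..n}. fact (\<alpha> i))) = real (fact k)"
    by (simp only:)
  then show ?thesis
    by (simp only: of_nat_mult of_nat_prod of_nat_fact)
qed

lemma card_words_with_counts_pos: "\<alpha> \<in> multi_idx n k \<Longrightarrow> 0 < card (words_with_counts n k \<alpha>)"
  using canonical_word_in_words count_list_canonical_word_eq finite_words_with_counts
  by (fastforce simp: card_gt_0_iff words_with_counts_def)

lemma bernstein_eq_card_words_with_counts:
  assumes "\<alpha> \<in> multi_idx n k"
  shows "bernstein n k \<alpha> x = real (card (words_with_counts n k \<alpha>)) * (\<Prod>i\<in>{0..n}. bary n x i ^ \<alpha> i)"
proof -
  have "(\<Prod>i\<in>{0..n}. fact (\<alpha> i) :: real) \<noteq> 0"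
    by (simp add: prod_zero_iff)
  then show ?thesis
    using card_words_with_counts[OF assms] by (simp add: bernstein_def field_simps)
qed

definition count_average :: "nat \<Rightarrow> nat \<Rightarrow> (nat list \<Rightarrow> real) \<Rightarrow> (nat \<Rightarrow> nat) \<Rightarrow> real" where
  "count_average n k G \<alpha> = (\<Sum>ts\<in>words_with_counts n k \<alpha>. G ts) / card (words_with_counts n k \<alpha>)"

lemma sum_words_eq_bernstein_sum:
  "(\<Sum>ts\<in>words {0..n} k. G ts * (\<Prod>u\<leftarrow>ts. bary n x u))
     = (\<Sum>\<alpha>\<in>multi_idx n k. count_average n k G \<alpha> * bernstein n k \<alpha> x)"
proof -
  have "(\<Sum>ts\<in>words {0..n} k. G ts * (\<Prod>u\<leftarrow>ts. bary n x u))
      = (\<Sum>ts\<in>words {0..n} k. G ts * (\<Prod>i\<in>{0..n}. bary n x i ^ count_list ts i))"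
    by (intro sum.cong refl) (simp add: words_def prod_list_eq_prod_count_list[of _ n])
  also have "\<dots> = (\<Sum>\<alpha>\<in>multi_idx n k. \<Sum>ts\<in>words_with_counts n k \<alpha>.
      G ts * (\<Prod>i\<in>{0..n}. bary n x i ^ count_list ts i))"
    unfolding words_with_counts_def
    by (rule sum.group[symmetric, OF finite_words finite_multi_idx]) (auto intro: count_list_in_multi_idx)
  also have "\<dots> = (\<Sum>\<alpha>\<in>multi_idx n k. count_average n k G \<alpha> * bernstein n k \<alpha> x)"
  proof (intro sum.cong refl)
    fix \<alpha> assume \<alpha>: "\<alpha> \<in> multi_idx n k"
    have "(\<Sum>ts\<in>words_with_counts n k \<alpha>. G ts * (\<Prod>i\<in>{0..n}. bary n x i ^ count_list ts i))
        = (\<Sum>ts\<in>words_with_counts n k \<alpha>. G ts * (\<Prod>i\<in>{0..n}. bary n x i ^ \<alpha> i))"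
      by (intro sum.cong refl) (simp add: words_with_counts_def)
    also have "\<dots> = (\<Sum>ts\<in>words_with_counts n k \<alpha>. G ts) * (\<Prod>i\<in>{0..n}. bary n x i ^ \<alpha> i)"
      by (simp add: sum_distrib_right)
    also have "\<dots> = count_average n k G \<alpha> * bernstein n k \<alpha> x"
      using card_words_with_counts_pos[OF \<alpha>]
      by (simp add: count_average_def bernstein_eq_card_words_with_counts[OF \<alpha>])
    finally show "(\<Sum>ts\<in>words_with_counts n k \<alpha>. G ts * (\<Prod>i\<in>{0..n}. bary n x i ^ count_list ts i))
        = count_average n k G \<alpha> * bernstein n k \<alpha> x" .
  qed
  finally show ?thesis .
qed

lemma bernstein_sum_eq_sum_words:
  "(\<Sum>\<alpha>\<in>multi_idx n k. b \<alpha> * bernstein n k \<alpha> x)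
     = (\<Sum>ts\<in>words {0..n} k. b (count_list ts) * (\<Prod>u\<leftarrow>ts. bary n x u))"
proof -
  have "count_average n k (\<lambda>ts. b (count_list ts)) \<alpha> = b \<alpha>" if "\<alpha> \<in> multi_idx n k" for \<alpha>
  proof -
    have "(\<Sum>ts\<in>words_with_counts n k \<alpha>. b (count_list ts)) = (\<Sum>ts\<in>words_with_counts n k \<alpha>. b \<alpha>)"
      by (intro sum.cong refl) (simp add: words_with_counts_def)
    then show ?thesis
      using card_words_with_counts_pos[OF that] by (simp add: count_average_def)
  qed
  then show ?thesis
    unfolding sum_words_eq_bernstein_sum by (intro sum.cong refl) simp
qed

lemma bary_sum: "(\<Sum>i\<in>{0..n}. bary n x i) = 1"
proof -
  have "(\<Sum>i\<in>{0..n}. bary n x i) = bary n x 0 + (\<Sum>i\<in>{1..n}. bary n x i)"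
    using sum.atLeast_Suc_atMost[of 0 n "bary n x"] by simp
  moreover have "(\<Sum>i\<in>{1..n}. bary n x i) = (\<Sum>i\<in>{1..n}. x i)"
    by (intro sum.cong) (auto simp: bary_def)
  moreover have "bary n x 0 = 1 - (\<Sum>i\<in>{1..n}. x i)"
    by (simp add: bary_def)
  ultimately show ?thesis
    by linarith
qed

section \<open>Uniqueness of Bernstein coefficients\<close>

lemma sum_monomials_slice_eq_0:
  fixes e :: "(nat \<Rightarrow> nat) \<Rightarrow> real"
  assumes "finite A" and zero: "\<forall>y. (\<Sum>\<alpha>\<in>A. e \<alpha> * (\<Prod>i<Suc m. y i ^ \<alpha> i)) = 0"
  shows "(\<Sum>\<alpha>\<in>{\<alpha>\<in>A. \<alpha> m = j}. e \<alpha> * (\<Prod>i<m. y i ^ \<alpha> i)) = 0"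
proof -
  define N where "N = Max ((\<lambda>\<alpha>. \<alpha> m) ` A)"
  define C where "C j = (\<Sum>\<alpha>\<in>{\<alpha>\<in>A. \<alpha> m = j}. e \<alpha> * (\<Prod>i<m. y i ^ \<alpha> i))" for j
  have "(\<Sum>j\<le>N. C j * t ^ j) = 0" for t
  proof -
    have "(\<Sum>j\<le>N. C j * t ^ j) = (\<Sum>j\<le>N. \<Sum>\<alpha>\<in>{\<alpha>\<in>A. \<alpha> m = j}. e \<alpha> * (\<Prod>i<m. y i ^ \<alpha> i) * t ^ \<alpha> m)"
      unfolding C_def by (intro sum.cong refl) (simp add: sum_distrib_right)
    also have "\<dots> = (\<Sum>\<alpha>\<in>A. e \<alpha> * (\<Prod>i<m. y i ^ \<alpha> i) * t ^ \<alpha> m)"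
      by (rule sum.group) (use \<open>finite A\<close> in \<open>auto simp: N_def\<close>)
    also have "\<dots> = (\<Sum>\<alpha>\<in>A. e \<alpha> * (\<Prod>i<Suc m. (y(m := t)) i ^ \<alpha> i))"
      by (intro sum.cong refl) (simp add: lessThan_Suc mult.commute)
    also have "\<dots> = 0"
      using zero by blast
    finally show ?thesis .
  qed
  then have coeffs: "\<forall>j\<le>N. C j = 0"
    using polyfun_eq_0[of C N] by simp
  have empty: "{\<alpha>\<in>A. \<alpha> m = j} = {}" if "N < j"
  proof -
    have "\<alpha> m \<le> N" if "\<alpha> \<in> A" for \<alpha>
      unfolding N_def using \<open>finite A\<close> that by (simp add: Max_ge)
    with \<open>N < j\<close> show ?thesis
      by fastforce
  qed
  show ?thesis
  proof (cases "j \<le> N")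
    case True
    with coeffs show ?thesis
      by (simp add: C_def)
  next
    case False
    then show ?thesis
      using empty by (simp only: not_le sum.empty)
  qed
qed

lemma sum_monomials_eq_0_imp_coeffs_eq_0:
  fixes e :: "(nat \<Rightarrow> nat) \<Rightarrow> real"
  assumes "finite A" "\<forall>\<alpha>\<in>A. \<forall>i\<ge>m. \<alpha> i = 0"
    and "\<forall>y. (\<Sum>\<alpha>\<in>A. e \<alpha> * (\<Prod>i<m. y i ^ \<alpha> i)) = 0"
  shows "\<forall>\<alpha>\<in>A. e \<alpha> = 0"
  using assms
proof (induction m arbitrary: A e)
  case 0
  then have "A \<subseteq> {\<lambda>_. 0}"
    by auto
  then show ?case
    using "0.prems"(3) by (auto simp: subset_singleton_iff)
next
  case (Suc m)
  show ?case
  proof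
    fix \<alpha>0 assume "\<alpha>0 \<in> A"
    define j where "j = \<alpha>0 m"
    define A' where "A' = (\<lambda>\<alpha>. \<alpha>(m := 0)) ` {\<alpha>\<in>A. \<alpha> m = j}"
    have inj: "inj_on (\<lambda>\<alpha>. \<alpha>(m := 0)) {\<alpha>\<in>A. \<alpha> m = j}"
      by (rule inj_onI) (metis (mono_tags, lifting) fun_upd_triv fun_upd_upd mem_Collect_eq)
    have "\<forall>\<beta>\<in>A'. e (\<beta>(m := j)) = 0"
    proof (rule Suc.IH)
      show "finite A'"
        using Suc.prems(1) by (simp add: A'_def)
      show "\<forall>\<beta>\<in>A'. \<forall>i\<ge>m. \<beta> i = 0"
        using Suc.prems(2) by (auto simp: A'_def)
      show "\<forall>y. (\<Sum>\<beta>\<in>A'. e (\<beta>(m := j)) * (\<Prod>i<m. y i ^ \<beta> i)) = 0"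
      proof
        fix y
        have "(\<Sum>\<beta>\<in>A'. e (\<beta>(m := j)) * (\<Prod>i<m. y i ^ \<beta> i))
            = (\<Sum>\<alpha>\<in>{\<alpha>\<in>A. \<alpha> m = j}. e \<alpha> * (\<Prod>i<m. y i ^ \<alpha> i))"
          unfolding A'_def sum.reindex[OF inj] by (intro sum.cong refl) (auto intro!: prod.cong)
        also have "\<dots> = 0"
          by (rule sum_monomials_slice_eq_0[OF Suc.prems(1,3)])
        finally show "(\<Sum>\<beta>\<in>A'. e (\<beta>(m := j)) * (\<Prod>i<m. y i ^ \<beta> i)) = 0" .
      qed
    qed
    moreover have "\<alpha>0(m := 0) \<in> A'"
      using \<open>\<alpha>0 \<in> A\<close> by (auto simp: A'_def j_def)
    ultimately show "e \<alpha>0 = 0"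
      by (fastforce simp: j_def)
  qed
qed

lemma sum_homogeneous_scale:
  fixes c :: "'a::comm_semiring_1"
  shows "(\<Sum>\<alpha>\<in>multi_idx n k. e \<alpha> * (\<Prod>i\<in>{0..n}. (c * y i) ^ \<alpha> i))
     = c ^ k * (\<Sum>\<alpha>\<in>multi_idx n k. e \<alpha> * (\<Prod>i\<in>{0..n}. y i ^ \<alpha> i))"
proof -
  have scale: "(\<Prod>i\<in>{0..n}. (c * y i) ^ \<alpha> i) = c ^ k * (\<Prod>i\<in>{0..n}. y i ^ \<alpha> i)"
    if "\<alpha> \<in> multi_idx n k" for \<alpha>
    using that by (simp add: power_mult_distrib prod.distrib power_sum[symmetric] multi_idx_def)
  show ?thesis
    unfolding sum_distrib_left by (intro sum.cong refl) (simp add: scale mult.left_commute)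
qed

text \<open>Dividing \<open>y\<close> by its coordinate sum turns it into barycentric coordinates.\<close>

lemma sum_homogeneous_eq_0_if_sum_nonzero:
  fixes e :: "(nat \<Rightarrow> nat) \<Rightarrow> real"
  assumes bary_zero: "\<forall>x. (\<Sum>\<alpha>\<in>multi_idx n k. e \<alpha> * (\<Prod>i\<in>{0..n}. bary n x i ^ \<alpha> i)) = 0"
    and "(\<Sum>i\<in>{0..n}. y i) \<noteq> 0"
  shows "(\<Sum>\<alpha>\<in>multi_idx n k. e \<alpha> * (\<Prod>i\<in>{0..n}. y i ^ \<alpha> i)) = 0"
proof -
  define s where "s = (\<Sum>i\<in>{0..n}. y i)"
  define x where "x i = y i / s" for i
  have "s \<noteq> 0"
    using assms(2) by (simp add: s_def)
  have "bary n x i = y i / s" if "i \<le> n" for i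
  proof (cases "i = 0")
    case True
    have "s = y 0 + (\<Sum>j\<in>{1..n}. y j)"
      using sum.atLeast_Suc_atMost[of 0 n y] by (simp add: s_def)
    then show ?thesis
      using True \<open>s \<noteq> 0\<close> by (simp add: bary_def x_def field_simps flip: sum_divide_distrib)
  qed (simp add: bary_def x_def)
  then have "(\<Sum>\<alpha>\<in>multi_idx n k. e \<alpha> * (\<Prod>i\<in>{0..n}. y i ^ \<alpha> i))
      = (\<Sum>\<alpha>\<in>multi_idx n k. e \<alpha> * (\<Prod>i\<in>{0..n}. (s * bary n x i) ^ \<alpha> i))"
    using \<open>s \<noteq> 0\<close> by (intro sum.cong prod.cong refl) auto
  also have "\<dots> = 0"
    using bary_zero by (simp add: sum_homogeneous_scale)
  finally show ?thesis .
qed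

lemma sum_homogeneous_eq_0:
  fixes e :: "(nat \<Rightarrow> nat) \<Rightarrow> real"
  assumes bary_zero: "\<forall>x. (\<Sum>\<alpha>\<in>multi_idx n k. e \<alpha> * (\<Prod>i\<in>{0..n}. bary n x i ^ \<alpha> i)) = 0"
  shows "(\<Sum>\<alpha>\<in>multi_idx n k. e \<alpha> * (\<Prod>i\<in>{0..n}. y i ^ \<alpha> i)) = 0"
proof (cases "(\<Sum>i\<in>{0..n}. y i) = 0")
  case False
  then show ?thesis
    by (rule sum_homogeneous_eq_0_if_sum_nonzero[OF bary_zero])
next
  case True
  define g where "g t = (\<Sum>\<alpha>\<in>multi_idx n k. e \<alpha> * (\<Prod>i\<in>{0..n}. (y i + of_bool (i = 0) * t) ^ \<alpha> i))"
    for t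
  have "g t = 0" if "t \<noteq> 0" for t
  proof -
    have "(\<Sum>i\<in>{0..n}. of_bool (i = 0) * t) = (\<Sum>i\<in>{0..n}. if i = 0 then t else 0)"
      by (intro sum.cong refl) simp
    then have "(\<Sum>i\<in>{0..n}. y i + of_bool (i = 0) * t) = t"
      using True by (simp add: sum.distrib)
    then show ?thesis
      unfolding g_def using sum_homogeneous_eq_0_if_sum_nonzero[OF bary_zero] that by simp
  qed
  then have "\<forall>\<^sub>F t in at 0. g t = 0"
    by (auto simp: eventually_at_filter)
  then have lim_0: "g \<midarrow>0\<rightarrow> 0"
    by (simp add: tendsto_eventually)
  have "isCont g 0"
    unfolding g_def by (intro continuous_intros)
  then have "g \<midarrow>0\<rightarrow> g 0"
    by (simp add: isCont_def)
  with lim_0 have "g 0 = 0"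
    using LIM_unique by blast
  then show ?thesis
    by (simp add: g_def)
qed

lemma bernstein_sum_eq_0_imp_coeffs_eq_0:
  assumes "\<forall>x. (\<Sum>\<alpha>\<in>multi_idx n k. d \<alpha> * bernstein n k \<alpha> x) = 0"
  shows "\<forall>\<alpha>\<in>multi_idx n k. d \<alpha> = 0"
proof -
  define e where "e \<alpha> = d \<alpha> * (fact k / (\<Prod>i\<in>{0..n}. fact (\<alpha> i)))" for \<alpha>
  have "\<forall>x. (\<Sum>\<alpha>\<in>multi_idx n k. e \<alpha> * (\<Prod>i\<in>{0..n}. bary n x i ^ \<alpha> i)) = 0"
    using assms by (simp add: e_def bernstein_def mult.assoc)
  then have "\<forall>y. (\<Sum>\<alpha>\<in>multi_idx n k. e \<alpha> * (\<Prod>i<Suc n. y i ^ \<alpha> i)) = 0"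
    using sum_homogeneous_eq_0[where e = e] by (simp add: atLeast0AtMost lessThan_Suc_atMost)
  moreover have "\<forall>\<alpha>\<in>multi_idx n k. \<forall>i\<ge>Suc n. \<alpha> i = 0"
    by (simp add: multi_idx_def)
  ultimately have "\<forall>\<alpha>\<in>multi_idx n k. e \<alpha> = 0"
    using sum_monomials_eq_0_imp_coeffs_eq_0[OF finite_multi_idx] by blast
  then show ?thesis
    by (simp add: e_def prod_zero_iff)
qed

lemma bern_coeff_eqI:
  assumes "\<forall>\<alpha>. \<alpha> \<notin> multi_idx n k \<longrightarrow> b \<alpha> = 0"
    and "\<forall>x. peval n c x = (\<Sum>\<alpha>\<in>multi_idx n k. b \<alpha> * bernstein n k \<alpha> x)"
  shows "bern_coeff n c k = b"
  unfolding bern_coeff_def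
proof (rule the_equality)
  fix b' assume b': "(\<forall>\<alpha>. \<alpha> \<notin> multi_idx n k \<longrightarrow> b' \<alpha> = 0) \<and>
    (\<forall>x. peval n c x = (\<Sum>\<alpha>\<in>multi_idx n k. b' \<alpha> * bernstein n k \<alpha> x))"
  have "\<forall>x. (\<Sum>\<alpha>\<in>multi_idx n k. (b' \<alpha> - b \<alpha>) * bernstein n k \<alpha> x) = 0"
    using b' assms(2) by (simp add: left_diff_distrib sum_subtractf)
  then have "\<forall>\<alpha>\<in>multi_idx n k. b' \<alpha> - b \<alpha> = 0"
    by (rule bernstein_sum_eq_0_imp_coeffs_eq_0)
  with b' assms(1) show "b' = b"
    by (metis eq_iff_diff_eq_0 ext)
qed (use assms in blast)

lemma finite_monomial_exps: "finite (monomial_exps n l)"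
proof (rule finite_subset)
  show "monomial_exps n l \<subseteq> (\<lambda>\<alpha>. \<alpha>(0 := 0)) ` multi_idx n l"
  proof
    fix \<beta> assume \<beta>: "\<beta> \<in> monomial_exps n l"
    define \<alpha> where "\<alpha> = \<beta>(0 := l - (\<Sum>i\<in>{1..n}. \<beta> i))"
    have "(\<Sum>i\<in>{1..n}. \<alpha> i) = (\<Sum>i\<in>{1..n}. \<beta> i)"
      by (intro sum.cong) (auto simp: \<alpha>_def)
    then have "\<alpha> \<in> multi_idx n l"
      using \<beta> sum.atLeast_Suc_atMost[of 0 n \<alpha>] by (simp add: multi_idx_def monomial_exps_def \<alpha>_def)
    moreover have "\<beta> = \<alpha>(0 := 0)"
      using \<beta> by (auto simp: \<alpha>_def monomial_exps_def)
    ultimately show "\<beta> \<in> (\<lambda>\<alpha>. \<alpha>(0 := 0)) ` multi_idx n l"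
      by blast
  qed
qed (simp add: finite_multi_idx)

text \<open>A monomial of degree \<open>s \<le> l\<close> is the sum of the degree-\<open>l\<close> products of barycentric
  coordinates over all words starting with its canonical word, since the remaining letters
  contribute \<open>(\<Sum>i. bary n x i) ^ (l - s) = 1\<close>.\<close>

lemma monomial_eq_sum_words:
  assumes "\<beta> \<in> monomial_exps n l"
  shows "(\<Prod>i\<in>{1..n}. x i ^ \<beta> i) = (\<Sum>ts\<in>words {0..n} l.
           of_bool (take (\<Sum>i\<in>{1..n}. \<beta> i) ts = canonical_word n \<beta>) * (\<Prod>u\<leftarrow>ts. bary n x u))"
proof -
  define s where "s = (\<Sum>i\<in>{1..n}. \<beta> i)"
  define w where "w = canonical_word n \<beta>"
  have "s \<le> l" "\<beta> 0 = 0"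
    using assms by (auto simp: monomial_exps_def s_def)
  then have "\<beta> \<in> multi_idx n s"
    using assms sum.atLeast_Suc_atMost[of 0 n \<beta>] by (simp add: multi_idx_def monomial_exps_def s_def)
  then have w: "w \<in> words {0..n} s" "count_list w = \<beta>"
    by (simp_all add: w_def canonical_word_in_words count_list_canonical_word_eq)
  have "(\<Prod>u\<leftarrow>w. bary n x u) = (\<Prod>i\<in>{0..n}. bary n x i ^ \<beta> i)"
    using w prod_list_eq_prod_count_list[of w n] by (simp add: words_def)
  also have "\<dots> = (\<Prod>i\<in>{1..n}. x i ^ \<beta> i)"
    using \<open>\<beta> 0 = 0\<close> prod.atLeast_Suc_atMost[of 0 n "\<lambda>i. bary n x i ^ \<beta> i"] by (simp add: bary_def)
  finally have monomial: "(\<Prod>i\<in>{1..n}. x i ^ \<beta> i) = (\<Prod>u\<leftarrow>w. bary n x u)" ..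
  have "(\<Sum>ts\<in>words {0..n} l. of_bool (take s ts = w) * (\<Prod>u\<leftarrow>ts. bary n x u))
      = (\<Sum>us\<in>words {0..n} s. of_bool (us = w) * (\<Prod>u\<leftarrow>us. bary n x u))"
    using sum_words_take[OF \<open>s \<le> l\<close>, where H = "\<lambda>us. of_bool (us = w)" and A = "{0..n}" and y = "bary n x"]
    by (simp add: bary_sum)
  also have "\<dots> = (\<Prod>u\<leftarrow>w. bary n x u)"
    using w(1) by (simp add: finite_words if_distrib cong: if_cong)
  finally show ?thesis
    using monomial by (simp add: s_def w_def)
qed

lemma peval_eq_sum_words:
  assumes "is_poly n l c"
  obtains G where "\<And>x. peval n c x = (\<Sum>ts\<in>words {0..n} l. G ts * (\<Prod>u\<leftarrow>ts. bary n x u))"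
proof
  define B where "B = {\<beta>. c \<beta> \<noteq> 0}"
  have B: "B \<subseteq> monomial_exps n l"
    using assms by (auto simp: is_poly_def B_def)
  then have "finite B"
    using finite_monomial_exps finite_subset by blast
  fix x
  have "peval n c x = (\<Sum>\<beta>\<in>B. c \<beta> * (\<Sum>ts\<in>words {0..n} l.
      of_bool (take (\<Sum>i\<in>{1..n}. \<beta> i) ts = canonical_word n \<beta>) * (\<Prod>u\<leftarrow>ts. bary n x u)))"
    unfolding peval_def B_def[symmetric] by (intro sum.cong refl) (use B monomial_eq_sum_words in auto)
  also have "\<dots> = (\<Sum>ts\<in>words {0..n} l. (\<Sum>\<beta>\<in>B. c \<beta> *
      of_bool (take (\<Sum>i\<in>{1..n}. \<beta> i) ts = canonical_word n \<beta>)) * (\<Prod>u\<leftarrow>ts. bary n x u))"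
    by (simp add: sum_distrib_left sum_distrib_right mult.assoc sum.swap[of _ B])
  finally show "peval n c x = \<dots>" .
qed

lemma peval_eq_bernstein_sum:
  assumes "is_poly n l c"
  shows "peval n c x = (\<Sum>\<alpha>\<in>multi_idx n l. bern_coeff n c l \<alpha> * bernstein n l \<alpha> x)"
proof -
  obtain G where G: "\<And>x. peval n c x = (\<Sum>ts\<in>words {0..n} l. G ts * (\<Prod>u\<leftarrow>ts. bary n x u))"
    using peval_eq_sum_words[OF assms] by blast
  define b where "b \<alpha> = (if \<alpha> \<in> multi_idx n l then count_average n l G \<alpha> else 0)" for \<alpha>
  have expansion: "\<forall>x. peval n c x = (\<Sum>\<alpha>\<in>multi_idx n l. b \<alpha> * bernstein n l \<alpha> x)"
    by (simp add: G sum_words_eq_bernstein_sum b_def)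
  have "bern_coeff n c l = b"
    by (rule bern_coeff_eqI) (use expansion in \<open>auto simp: b_def\<close>)
  with expansion show ?thesis
    by simp
qed

lemma peval_eq_sum_words_bern_coeff:
  assumes "is_poly n l c"
  shows "peval n c x = (\<Sum>us\<in>words {0..n} l. bern_coeff n c l (count_list us) * (\<Prod>u\<leftarrow>us. bary n x u))"
  by (simp add: peval_eq_bernstein_sum[OF assms] bernstein_sum_eq_sum_words)

section \<open>Degree elevation\<close>

definition injections :: "nat \<Rightarrow> nat \<Rightarrow> nat list set" where
  "injections k l = {s. length s = l \<and> distinct s \<and> set s \<subseteq> {..<k}}"

lemma injections_subset_words: "injections k l \<subseteq> words {..<k} l"
  by (auto simp: injections_def words_def)

lemma finite_injections: "finite (injections k l)"
  using injections_subset_words finite_words[of "{..<k}" l] finite_subset by blast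

lemma card_injections: "l \<le> k \<Longrightarrow> card (injections k l) = \<Prod>{k - l + 1..k}"
  using card_lists_distinct_length_eq[of "{..<k}" l] by (simp add: injections_def)

lemma card_injections_pos: "l \<le> k \<Longrightarrow> 0 < card (injections k l)"
proof -
  assume "l \<le> k"
  then have "[0..<l] \<in> injections k l"
    by (auto simp: injections_def)
  then show ?thesis
    using finite_injections card_gt_0_iff by blast
qed

lemma degree_elevation:
  fixes H :: "nat list \<Rightarrow> real"
  assumes "l \<le> k"
  shows "(\<Sum>ts\<in>words {0..n} k.
            (\<Sum>s\<in>injections k l. H (map (nth ts) s)) / card (injections k l) * (\<Prod>u\<leftarrow>ts. bary n x u))
       = (\<Sum>us\<in>words {0..n} l. H us * (\<Prod>u\<leftarrow>us. bary n x u))"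
proof -
  let ?N = "real (card (injections k l))"
  have "?N \<noteq> 0"
    using card_injections_pos[OF assms] by simp
  have subword: "(\<Sum>ts\<in>words {0..n} k. H (map (nth ts) s) * (\<Prod>u\<leftarrow>ts. bary n x u))
      = (\<Sum>us\<in>words {0..n} l. H us * (\<Prod>u\<leftarrow>us. bary n x u))" if "s \<in> injections k l" for s
    using that sum_words_subword[of "{0..n}" s l k H "bary n x"] sum_words_take[OF assms, where H = H and A = "{0..n}"]
    by (simp add: injections_def bary_sum)
  have "(\<Sum>ts\<in>words {0..n} k. (\<Sum>s\<in>injections k l. H (map (nth ts) s)) / ?N * (\<Prod>u\<leftarrow>ts. bary n x u))
      = (\<Sum>s\<in>injections k l. \<Sum>ts\<in>words {0..n} k. H (map (nth ts) s) * (\<Prod>u\<leftarrow>ts. bary n x u)) / ?N"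
    by (simp add: sum_divide_distrib sum_distrib_right sum.swap[of _ "injections k l"])
  also have "\<dots> = (\<Sum>s\<in>injections k l. \<Sum>us\<in>words {0..n} l. H us * (\<Prod>u\<leftarrow>us. bary n x u)) / ?N"
    by (simp add: subword)
  also have "\<dots> = (\<Sum>us\<in>words {0..n} l. H us * (\<Prod>u\<leftarrow>us. bary n x u))"
    using \<open>?N \<noteq> 0\<close> by simp
  finally show ?thesis .
qed

lemma prod_falling_lower_bound:
  assumes "l \<le> k"
  shows "real k ^ l - real (l * (l - 1)) / 2 * real k ^ (l - 1) \<le> real (\<Prod>{k - l + 1..k})"
  using assms
proof (induction l)
  case (Suc l)
  define P where "P = real (\<Prod>{k - l + 1..k})"
  define T where "T = real (l * (l - 1)) / 2 * real k ^ (l - 1)"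
  have IH: "real k ^ l - T \<le> P"
    using Suc by (simp add: P_def T_def)
  have "\<Prod>{k - l..k} = (k - l) * \<Prod>{Suc (k - l)..k}"
    by (rule prod.atLeast_Suc_atMost) simp
  then have step: "real (\<Prod>{k - Suc l + 1..k}) = (real k - real l) * P"
    using Suc.prems by (simp add: P_def of_nat_diff Suc_diff_Suc)
  have "real k * T = real (l * (l - 1)) / 2 * real k ^ l"
    unfolding T_def by (cases l) auto
  moreover have "(real k - real l) * (real k ^ l - T)
      = real k ^ Suc l - real l * real k ^ l - real k * T + real l * T"
    by (simp add: algebra_simps)
  moreover have "real (Suc l * (Suc l - 1)) / 2 * real k ^ (Suc l - 1)
      = real l * real k ^ l + real (l * (l - 1)) / 2 * real k ^ l"
    by (cases l) (auto simp: algebra_simps)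
  moreover have "(real k - real l) * (real k ^ l - T) \<le> (real k - real l) * P"
    using IH Suc.prems by (intro mult_left_mono) auto
  moreover have "0 \<le> real l * T"
    by (simp add: T_def)
  ultimately show ?case
    using step by linarith
qed simp

lemma card_non_injections_le:
  assumes "l \<le> k"
  shows "real (card (words {..<k} l - injections k l)) \<le> real (l * (l - 1)) / 2 * real k ^ (l - 1)"
proof -
  have "card (words {..<k} l - injections k l) = k ^ l - \<Prod>{k - l + 1..k}"
    using card_Diff_subset[OF finite_injections injections_subset_words]
    by (simp add: card_words card_injections[OF assms])
  moreover have "\<Prod>{k - l + 1..k} \<le> k ^ l"
    using card_mono[OF finite_words injections_subset_words, of k l]
    by (simp add: card_words card_injections[OF assms])
  ultimately show ?thesis
    using prod_falling_lower_bound[OF assms] by (simp add: of_nat_diff)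
qed

lemma sum_words_map:
  fixes F :: "'b list \<Rightarrow> real"
  assumes "finite A" "finite B" "g ` A \<subseteq> B"
  shows "(\<Sum>s\<in>words A m. F (map g s))
       = (\<Sum>us\<in>words B m. F us * (\<Prod>u\<leftarrow>us. real (card {a\<in>A. g a = u})))"
proof (induction m arbitrary: F)
  case (Suc m)
  let ?c = "\<lambda>u. real (card {a\<in>A. g a = u})"
  have group: "(\<Sum>a\<in>A. h (g a)) = (\<Sum>u\<in>B. ?c u * h u)" for h :: "'b \<Rightarrow> real"
  proof -
    have "(\<Sum>a\<in>A. h (g a)) = (\<Sum>u\<in>B. \<Sum>a\<in>{a\<in>A. g a = u}. h (g a))"
      by (rule sum.group[symmetric]) (use assms in auto)
    also have "\<dots> = (\<Sum>u\<in>B. ?c u * h u)"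
      by (intro sum.cong refl) simp
    finally show ?thesis .
  qed
  have "(\<Sum>s\<in>words A (Suc m). F (map g s)) = (\<Sum>a\<in>A. \<Sum>s\<in>words A m. F (g a # map g s))"
    by (simp add: sum_words_Suc)
  also have "\<dots> = (\<Sum>a\<in>A. \<Sum>us\<in>words B m. F (g a # us) * (\<Prod>u\<leftarrow>us. ?c u))"
    by (intro sum.cong refl) (rule Suc.IH)
  also have "\<dots> = (\<Sum>us\<in>words B m. \<Sum>a\<in>A. F (g a # us) * (\<Prod>u\<leftarrow>us. ?c u))"
    by (rule sum.swap)
  also have "\<dots> = (\<Sum>us\<in>words B m. \<Sum>u\<in>B. ?c u * (F (u # us) * (\<Prod>u\<leftarrow>us. ?c u)))"
    by (intro sum.cong refl group)
  also have "\<dots> = (\<Sum>us\<in>words B (Suc m). F us * (\<Prod>u\<leftarrow>us. ?c u))"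
    by (subst sum.swap) (simp add: sum_words_Suc mult_ac)
  finally show ?case .
qed simp

definition frequency_point :: "nat \<Rightarrow> nat list \<Rightarrow> nat \<Rightarrow> real" where
  "frequency_point n ts i = (if i \<in> {1..n} then count_list ts i / length ts else 0)"

lemma bary_frequency_point:
  assumes "ts \<in> words {0..n} k" "0 < k" "u \<le> n"
  shows "bary n (frequency_point n ts) u = count_list ts u / k"
proof (cases "u = 0")
  case True
  have "real k = count_list ts 0 + (\<Sum>i\<in>{1..n}. real (count_list ts i))"
    using assms(1) sum_count_set[of ts "{0..n}"] sum.atLeast_Suc_atMost[of 0 n "count_list ts"]
    by (simp add: words_def flip: of_nat_sum)
  then show ?thesis
    using True assms(1,2) by (simp add: bary_def frequency_point_def words_def field_simps
        flip: sum_divide_distrib)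
qed (use assms in \<open>simp add: bary_def frequency_point_def words_def\<close>)

lemma frequency_point_in_simplex:
  assumes "ts \<in> words {0..n} k" "0 < k"
  shows "frequency_point n ts \<in> simplex n"
proof -
  have "0 \<le> bary n (frequency_point n ts) 0"
    using bary_frequency_point[OF assms, of 0] by simp
  then show ?thesis
    by (auto simp: simplex_def bary_def frequency_point_def)
qed

lemma card_positions_eq_count_list: "card {a\<in>{..<length ts}. ts ! a = u} = count_list ts u"
  by (simp add: count_list_eq_length_filter length_filter_conv_card eq_commute conj_commute)

lemma sum_position_maps:
  assumes "ts \<in> words {0..n} k" "0 < k"
  shows "(\<Sum>s\<in>words {..<k} l. H (map (nth ts) s))
       = real k ^ l * (\<Sum>us\<in>words {0..n} l. H us * (\<Prod>u\<leftarrow>us. bary n (frequency_point n ts) u))"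
proof -
  have len: "length ts = k" "set ts \<subseteq> {0..n}"
    using assms(1) by (auto simp: words_def)
  have "(\<Sum>s\<in>words {..<k} l. H (map (nth ts) s))
      = (\<Sum>us\<in>words {0..n} l. H us * (\<Prod>u\<leftarrow>us. real (card {a\<in>{..<k}. ts ! a = u})))"
    by (rule sum_words_map) (use len in auto)
  also have "\<dots> = (\<Sum>us\<in>words {0..n} l. H us * (\<Prod>u\<leftarrow>us. real k * bary n (frequency_point n ts) u))"
  proof (intro sum.cong refl arg_cong[where f = "(*) _"] arg_cong[where f = prod_list] map_cong)
    fix us u assume "us \<in> words {0..n} l" "u \<in> set us"
    then have "u \<le> n"
      by (auto simp: words_def)
    then show "real (card {a\<in>{..<k}. ts ! a = u}) = real k * bary n (frequency_point n ts) u"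
      using assms bary_frequency_point card_positions_eq_count_list[of ts u] len by simp
  qed
  also have "\<dots> = real k ^ l * (\<Sum>us\<in>words {0..n} l. H us * (\<Prod>u\<leftarrow>us. bary n (frequency_point n ts) u))"
  proof -
    have scale: "(\<Prod>u\<leftarrow>us. c * f u) = c ^ length us * (\<Prod>u\<leftarrow>us. f u)" for c :: real and f us
      by (induction us) auto
    show ?thesis
      unfolding sum_distrib_left by (intro sum.cong refl) (simp add: words_def scale mult.left_commute)
  qed
  finally show ?thesis .
qed

lemma elevation_error_less:
  fixes M pm :: real
  assumes "0 < k" "0 < pm" "real (l * (l - 1)) / 2 * M < real k * pm"
  shows "real (l * (l - 1)) / 2 * real k ^ (l - 1) * M < real k ^ l * pm"
proof (cases l)
  case 0
  then show ?thesis
    using \<open>0 < pm\<close> by simp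
next
  case (Suc l')
  have "real k ^ l' * (real (l * (l - 1)) / 2 * M) < real k ^ l' * (real k * pm)"
    using assms by (intro mult_strict_left_mono) simp_all
  then show ?thesis
    using Suc by (simp add: mult_ac)
qed

lemma sum_injections_pos:
  fixes H :: "nat list \<Rightarrow> real"
  assumes ts: "ts \<in> words {0..n} k" and "l \<le> k" "0 < k" "0 < pm"
    and lower: "\<forall>x\<in>simplex n. pm \<le> (\<Sum>us\<in>words {0..n} l. H us * (\<Prod>u\<leftarrow>us. bary n x u))"
    and upper: "\<forall>us\<in>words {0..n} l. H us \<le> M"
    and key: "real (l * (l - 1)) / 2 * M < real k * pm"
  shows "0 < (\<Sum>s\<in>injections k l. H (map (nth ts) s))"
proof -
  let ?all = "words {..<k} l" and ?bad = "words {..<k} l - injections k l"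
  let ?S = "\<lambda>X. \<Sum>s\<in>X. H (map (nth ts) s)"
  have H_le: "H (map (nth ts) s) \<le> M" if "s \<in> ?all" for s
    using upper map_nth_in_words[OF ts that] by blast
  have "pm \<le> (\<Sum>us\<in>words {0..n} l. H us * (\<Prod>u\<leftarrow>us. bary n (frequency_point n ts) u))"
    using lower frequency_point_in_simplex[OF ts \<open>0 < k\<close>] by blast
  then have all_ge: "real k ^ l * pm \<le> ?S ?all"
    unfolding sum_position_maps[OF ts \<open>0 < k\<close>] by (intro mult_left_mono) simp_all
  have "?S ?all \<le> real k ^ l * M"
    using sum_bounded_above[of ?all "\<lambda>s. H (map (nth ts) s)" M] H_le by (simp add: card_words)
  with all_ge have "real k ^ l * pm \<le> real k ^ l * M"
    by linarith
  then have "pm \<le> M"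
    using \<open>0 < k\<close> by (simp add: mult_le_cancel_left_pos)
  then have "0 \<le> M"
    using \<open>0 < pm\<close> by linarith
  have "?S ?bad \<le> real (card ?bad) * M"
    using H_le by (intro sum_bounded_above) auto
  also have "\<dots> \<le> real (l * (l - 1)) / 2 * real k ^ (l - 1) * M"
    using card_non_injections_le[OF \<open>l \<le> k\<close>] \<open>0 \<le> M\<close> by (rule mult_right_mono)
  also have "\<dots> < real k ^ l * pm"
    using \<open>0 < k\<close> \<open>0 < pm\<close> key by (rule elevation_error_less)
  finally have "?S ?bad < ?S ?all"
    using all_ge by linarith
  moreover have "?S (injections k l) = ?S ?all - ?S ?bad"
    using sum_diff[OF finite_words injections_subset_words, where f = "\<lambda>s. H (map (nth ts) s)"] by simp
  ultimately show ?thesis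
    by linarith
qed

lemma count_average_pos:
  assumes "\<alpha> \<in> multi_idx n k" and "\<And>ts. ts \<in> words {0..n} k \<Longrightarrow> 0 < G ts"
  shows "0 < count_average n k G \<alpha>"
proof -
  have "words_with_counts n k \<alpha> \<noteq> {}"
    using card_words_with_counts_pos[OF assms(1)] by auto
  then have "0 < (\<Sum>ts\<in>words_with_counts n k \<alpha>. G ts)"
    using assms(2) by (intro sum_pos finite_words_with_counts) (auto simp: words_with_counts_def)
  then show ?thesis
    using card_words_with_counts_pos[OF assms(1)] by (simp add: count_average_def)
qed

lemma bern_coeff_le_Max_abs:
  "\<alpha> \<in> multi_idx n l \<Longrightarrow> bern_coeff n c l \<alpha> \<le> Max ((\<lambda>\<alpha>. \<bar>bern_coeff n c l \<alpha>\<bar>) ` multi_idx n l)"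
  using finite_multi_idx by (intro order_trans[OF abs_ge_self Max_ge]) auto

text \<open>The bound \<open>D\<^sub>2\<close>, with any positive lower bound \<open>pm\<close> of \<open>p\<close> on \<open>\<Delta>\<close> in place of its
  minimum.\<close>

theorem bern_coeff_pos_if_degree_large:
  assumes p: "is_poly n l p" and "0 < pm" and pm: "\<forall>x\<in>simplex n. pm \<le> peval n p x"
    and "l \<le> k" "0 < k"
    and key: "real (l * (l - 1)) / 2 * Max ((\<lambda>\<alpha>. \<bar>bern_coeff n p l \<alpha>\<bar>) ` multi_idx n l) < real k * pm"
    and \<alpha>: "\<alpha> \<in> multi_idx n k"
  shows "0 < bern_coeff n p k \<alpha>"
proof -
  define H where "H us = bern_coeff n p l (count_list us)" for us
  define G where "G ts = (\<Sum>s\<in>injections k l. H (map (nth ts) s)) / card (injections k l)" for ts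
  have "0 < G ts" if "ts \<in> words {0..n} k" for ts
  proof -
    have "0 < (\<Sum>s\<in>injections k l. H (map (nth ts) s))"
    proof (rule sum_injections_pos[OF that \<open>l \<le> k\<close> \<open>0 < k\<close> \<open>0 < pm\<close> _ _ key])
      show "\<forall>x\<in>simplex n. pm \<le> (\<Sum>us\<in>words {0..n} l. H us * (\<Prod>u\<leftarrow>us. bary n x u))"
        using pm by (simp add: H_def peval_eq_sum_words_bern_coeff[OF p])
      show "\<forall>us\<in>words {0..n} l. H us \<le> Max ((\<lambda>\<alpha>. \<bar>bern_coeff n p l \<alpha>\<bar>) ` multi_idx n l)"
        by (simp add: H_def bern_coeff_le_Max_abs count_list_in_multi_idx)
    qed
    then show ?thesis
      using card_injections_pos[OF \<open>l \<le> k\<close>] by (simp add: G_def)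
  qed
  define b where "b \<alpha> = (if \<alpha> \<in> multi_idx n k then count_average n k G \<alpha> else 0)" for \<alpha>
  have "peval n p x = (\<Sum>\<alpha>\<in>multi_idx n k. b \<alpha> * bernstein n k \<alpha> x)" for x
  proof -
    have "peval n p x = (\<Sum>us\<in>words {0..n} l. H us * (\<Prod>u\<leftarrow>us. bary n x u))"
      by (simp add: H_def peval_eq_sum_words_bern_coeff[OF p])
    also have "\<dots> = (\<Sum>ts\<in>words {0..n} k. G ts * (\<Prod>u\<leftarrow>ts. bary n x u))"
      unfolding G_def by (rule degree_elevation[OF \<open>l \<le> k\<close>, symmetric])
    also have "\<dots> = (\<Sum>\<alpha>\<in>multi_idx n k. count_average n k G \<alpha> * bernstein n k \<alpha> x)"
      by (rule sum_words_eq_bernstein_sum)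
    finally show ?thesis
      by (simp add: b_def)
  qed
  then have "bern_coeff n p k = b"
    by (intro bern_coeff_eqI) (simp_all add: b_def)
  with \<open>\<And>ts. ts \<in> words {0..n} k \<Longrightarrow> 0 < G ts\<close> show ?thesis
    using count_average_pos[OF \<alpha>] \<alpha> by (simp add: b_def)
qed

lemma simplex_eq_PiE_Int:
  "simplex n = Pi\<^sub>E UNIV (\<lambda>i. if i \<in> {1..n} then {0..1} else {0}) \<inter> {x. (\<Sum>i\<in>{1..n}. x i) \<le> 1}"
  (is "_ = Pi\<^sub>E UNIV ?K \<inter> _")
proof (intro set_eqI iffI)
  fix x assume x: "x \<in> simplex n"
  have "x i \<in> ?K i" for i
  proof (cases "i \<in> {1..n}")
    case True
    have "x i \<le> (\<Sum>j\<in>{1..n}. x j)"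
      by (rule member_le_sum[OF True]) (use x in \<open>auto simp: simplex_def\<close>)
    then show ?thesis
      using True x by (auto simp: simplex_def)
  next
    case False
    then have "i = 0 \<or> n < i"
      by auto
    then show ?thesis
      using False x by (auto simp: simplex_def)
  qed
  then show "x \<in> Pi\<^sub>E UNIV ?K \<inter> {x. (\<Sum>i\<in>{1..n}. x i) \<le> 1}"
    using x by (auto simp: simplex_def)
next
  fix x assume "x \<in> Pi\<^sub>E UNIV ?K \<inter> {x. (\<Sum>i\<in>{1..n}. x i) \<le> 1}"
  then have x: "\<And>i. x i \<in> ?K i" "(\<Sum>i\<in>{1..n}. x i) \<le> 1"
    by (simp_all add: PiE_iff)
  show "x \<in> simplex n"
    unfolding simplex_def
  proof (intro CollectI conjI allI impI ballI x(2))
    show "x i = 0" if "i = 0 \<or> n < i" for i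
      using that x(1)[of i] by (auto split: if_splits)
    show "0 \<le> x i" if "i \<in> {1..n}" for i
      using that x(1)[of i] by auto
  qed
qed

lemma compact_simplex: "compact (simplex n)"
proof -
  let ?K = "\<lambda>i. if i \<in> {1..n} then {0..1} else {0::real}"
  have "compactin (product_topology (\<lambda>i. euclidean) UNIV) (Pi\<^sub>E UNIV ?K)"
    unfolding compactin_PiE by auto
  then have "compact (Pi\<^sub>E UNIV ?K)"
    by (simp add: euclidean_product_topology)
  moreover have "closed {x::nat \<Rightarrow> real. (\<Sum>i\<in>{1..n}. x i) \<le> 1}"
    by (intro closed_Collect_le continuous_on_sum continuous_on_const) simp
  ultimately show ?thesis
    unfolding simplex_eq_PiE_Int using compact_Int_closed by blast
qed

lemma continuous_on_peval: "continuous_on S (peval n c)"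
proof -
  have "continuous_on S (\<lambda>x::nat \<Rightarrow> real. x i)" for i
    by (rule continuous_on_subset[OF continuous_on_product_coordinates]) simp
  then show ?thesis
    unfolding peval_def by (intro continuous_intros)
qed

lemma peval_attains_INF_on_simplex:
  obtains x0 where "x0 \<in> simplex n" "(INF x\<in>simplex n. peval n c x) = peval n c x0"
    "\<forall>x\<in>simplex n. peval n c x0 \<le> peval n c x"
proof -
  have "(\<lambda>_. 0) \<in> simplex n"
    by (simp add: simplex_def)
  then have "simplex n \<noteq> {}"
    by blast
  then obtain x0 where x0: "x0 \<in> simplex n" "\<forall>x\<in>simplex n. peval n c x0 \<le> peval n c x"
    using continuous_attains_inf[OF compact_simplex _ continuous_on_peval] by blast
  moreover have "(INF x\<in>simplex n. peval n c x) = peval n c x0"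
  proof (rule antisym)
    show "(INF x\<in>simplex n. peval n c x) \<le> peval n c x0"
      by (rule cINF_lower[OF _ x0(1)]) (use x0 in \<open>auto simp: bdd_below_def\<close>)
    show "peval n c x0 \<le> (INF x\<in>simplex n. peval n c x)"
      by (rule cINF_greatest[OF \<open>simplex n \<noteq> {}\<close>]) (use x0 in auto)
  qed
  ultimately show ?thesis
    using that by blast
qed

lemma bary_nonneg: "x \<in> simplex n \<Longrightarrow> i \<le> n \<Longrightarrow> 0 \<le> bary n x i"
  by (auto simp: simplex_def bary_def)

lemma peval_le_Max_abs_bern_coeff:
  assumes "is_poly n l c" "x \<in> simplex n"
  shows "peval n c x \<le> Max ((\<lambda>\<alpha>. \<bar>bern_coeff n c l \<alpha>\<bar>) ` multi_idx n l)"
    (is "_ \<le> ?M")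
proof -
  have "peval n c x = (\<Sum>us\<in>words {0..n} l. bern_coeff n c l (count_list us) * (\<Prod>u\<leftarrow>us. bary n x u))"
    by (rule peval_eq_sum_words_bern_coeff[OF assms(1)])
  also have "\<dots> \<le> (\<Sum>us\<in>words {0..n} l. ?M * (\<Prod>u\<leftarrow>us. bary n x u))"
  proof (rule sum_mono)
    fix us assume us: "us \<in> words {0..n} l"
    then have "0 \<le> (\<Prod>u\<leftarrow>us. bary n x u)"
      using assms(2) by (intro prod_list_nonneg) (auto simp: words_def bary_nonneg)
    then show "bern_coeff n c l (count_list us) * (\<Prod>u\<leftarrow>us. bary n x u) \<le> ?M * (\<Prod>u\<leftarrow>us. bary n x u)"
      using us by (intro mult_right_mono bern_coeff_le_Max_abs count_list_in_multi_idx)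
  qed
  also have "\<dots> = ?M"
    by (simp add: sum_distrib_left[symmetric] sum_prod_list_words bary_sum)
  finally show ?thesis .
qed

lemma unit_mult_in_multi_idx: "i \<le> n \<Longrightarrow> unit_mult k i \<in> multi_idx n k"
  by (auto simp: multi_idx_def unit_mult_def)

lemma degree_le_of_bound:
  fixes pm M :: real
  assumes "0 < pm" "pm \<le> M" "real (l * (l - 1)) / 2 * M < real k * pm"
  shows "l \<le> k" "0 < k"
proof -
  have "real (l * (l - 1)) / 2 * pm \<le> real (l * (l - 1)) / 2 * M"
    using assms(2) by (intro mult_left_mono) simp_all
  then have "real (l * (l - 1)) / 2 * pm < real k * pm"
    using assms(3) by linarith
  then have "real (l * (l - 1)) / 2 < real k"
    using assms(1) by (simp only: mult_less_cancel_right_pos)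
  then have "real (l * (l - 1)) < real (2 * k)"
    by simp
  then have "l * (l - 1) < 2 * k"
    by (simp only: of_nat_less_iff)
  moreover have "2 * (l - 1) \<le> l * (l - 1)"
    by (cases "l \<le> 1") simp_all
  ultimately show "l \<le> k" "0 < k"
    by linarith+
qed

theorem corollary5p15:
  fixes n l k :: nat and p q :: "(nat \<Rightarrow> nat) \<Rightarrow> real"
  assumes "is_poly n l p" and "is_poly n l q"
    and "\<forall>x\<in>simplex n. 0 < peval n p x / peval n q x"
    and "\<forall>x\<in>simplex n. 0 < peval n p x"
    and "\<forall>j\<ge>l. \<forall>\<alpha>\<in>multi_idx n j. 0 < bern_coeff n q j \<alpha>"
    and "real k > max
           (omega n l p q / (INF x\<in>simplex n. peval n p x / peval n q x) + 1)
           (real (l * (l - 1)) / 2 * Max ((\<lambda>\<alpha>. \<bar>bern_coeff n p l \<alpha>\<bar>) ` multi_idx n l)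
              / (INF x\<in>simplex n. peval n p x))"
  shows "Cert n k (bern_coeff_f n p q k)"
proof -
  define M where "M = Max ((\<lambda>\<alpha>. \<bar>bern_coeff n p l \<alpha>\<bar>) ` multi_idx n l)"
  define pm where "pm = (INF x\<in>simplex n. peval n p x)"
  obtain x0 where x0: "x0 \<in> simplex n" "pm = peval n p x0" "\<forall>x\<in>simplex n. pm \<le> peval n p x"
    using peval_attains_INF_on_simplex[of n p] unfolding pm_def by metis
  have "0 < pm"
    using x0 assms(4) by simp
  have key: "real (l * (l - 1)) / 2 * M < real k * pm"
    using assms(6) \<open>0 < pm\<close> by (simp add: M_def pm_def pos_divide_less_eq)
  moreover have "pm \<le> M"
    using peval_le_Max_abs_bern_coeff[OF assms(1) x0(1)] x0(2) by (simp add: M_def)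
  ultimately have "l \<le> k" "0 < k"
    using degree_le_of_bound[OF \<open>0 < pm\<close>] by blast+
  then have "0 < bern_coeff n p k \<alpha>" if "\<alpha> \<in> multi_idx n k" for \<alpha>
    using bern_coeff_pos_if_degree_large[OF assms(1) \<open>0 < pm\<close> x0(3) _ _ key[unfolded M_def] that] by blast
  moreover have "0 < bern_coeff n q k \<alpha>" if "\<alpha> \<in> multi_idx n k" for \<alpha>
    using assms(5) \<open>l \<le> k\<close> that by blast
  ultimately show ?thesis
    unfolding Cert_def bern_coeff_f_def using unit_mult_in_multi_idx by (auto intro: less_imp_le)
qed

end
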